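(* Let $T$ be a tree. Then $\gamma_{rdR}(T)=\gamma(T)+\gamma_r(T)$ if and only if $T$ is a star (i.e., $T\cong K_{1,m}$ for some $m\ge 0$, with $K_{1,0}=K_1$).
   Context: All graphs are finite and simple. An RDRD function of $G$ is a function $f:V(G)\to\{0,1,2,3\}$ such that every vertex with value $0$ has at least two neighbors with value $2$ or at least one neighbor with value $3$, every vertex with value $1$ has a neighbor with value $2$ or $3$, and the subgraph induced by the vertices with value $0$ has no isolated vertices; $\gamma_{rdR}(G)$ is the minimum of $\sum_v f(v)$ over RDRD functions. $\gamma(G)$ is the domination number; $\gamma_r(G)$ is the minimum cardinality of a set $S$ such that every vertex outside $S$ has a neighbor in $S$ and a neighbor outside $S$. *)

theory Defs
  imports Main
begin

definition simple_graph :: "'a set \<Rightarrow> ('a \<Rightarrow> 'a \<Rightarrow> bool) \<Rightarrow> bool" where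
  "simple_graph V E \<longleftrightarrow> finite V \<and> (\<forall>u v. E u v \<longrightarrow> E v u)
     \<and> (\<forall>v. \<not> E v v) \<and> (\<forall>u v. E u v \<longrightarrow> u \<in> V \<and> v \<in> V)"

definition is_walk :: "('a \<Rightarrow> 'a \<Rightarrow> bool) \<Rightarrow> 'a list \<Rightarrow> bool" where
  "is_walk E p \<longleftrightarrow> p \<noteq> [] \<and> (\<forall>i. Suc i < length p \<longrightarrow> E (p ! i) (p ! Suc i))"

definition connected_graph :: "'a set \<Rightarrow> ('a \<Rightarrow> 'a \<Rightarrow> bool) \<Rightarrow> bool" where
  "connected_graph V E \<longleftrightarrow> V \<noteq> {} \<and>
     (\<forall>u\<in>V. \<forall>v\<in>V. \<exists>p. is_walk E p \<and> hd p = u \<and> last p = v)"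

definition has_cycle :: "('a \<Rightarrow> 'a \<Rightarrow> bool) \<Rightarrow> bool" where
  "has_cycle E \<longleftrightarrow> (\<exists>p. length p \<ge> 3 \<and> distinct p \<and> is_walk E p \<and> E (last p) (hd p))"

definition is_tree :: "'a set \<Rightarrow> ('a \<Rightarrow> 'a \<Rightarrow> bool) \<Rightarrow> bool" where
  "is_tree V E \<longleftrightarrow> simple_graph V E \<and> connected_graph V E \<and> \<not> has_cycle E"

definition is_star :: "'a set \<Rightarrow> ('a \<Rightarrow> 'a \<Rightarrow> bool) \<Rightarrow> bool" where
  "is_star V E \<longleftrightarrow> (\<exists>c\<in>V. (\<forall>v\<in>V. v \<noteq> c \<longrightarrow> E c v) \<and> (\<forall>u v. E u v \<longrightarrow> u = c \<or> v = c))"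

definition dominating_set :: "'a set \<Rightarrow> ('a \<Rightarrow> 'a \<Rightarrow> bool) \<Rightarrow> 'a set \<Rightarrow> bool" where
  "dominating_set V E S \<longleftrightarrow> S \<subseteq> V \<and> (\<forall>v\<in>V - S. \<exists>u\<in>S. E v u)"

definition domination_number :: "'a set \<Rightarrow> ('a \<Rightarrow> 'a \<Rightarrow> bool) \<Rightarrow> nat" where
  "domination_number V E = (LEAST k. \<exists>S. dominating_set V E S \<and> card S = k)"

definition restrained_dominating_set :: "'a set \<Rightarrow> ('a \<Rightarrow> 'a \<Rightarrow> bool) \<Rightarrow> 'a set \<Rightarrow> bool" where
  "restrained_dominating_set V E S \<longleftrightarrow> S \<subseteq> V \<and>
     (\<forall>v\<in>V - S. (\<exists>u\<in>S. E v u) \<and> (\<exists>u\<in>V - S. E v u))"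

definition restrained_domination_number :: "'a set \<Rightarrow> ('a \<Rightarrow> 'a \<Rightarrow> bool) \<Rightarrow> nat" where
  "restrained_domination_number V E =
     (LEAST k. \<exists>S. restrained_dominating_set V E S \<and> card S = k)"

text \<open>Restrained double Roman dominating (RDRD) function; only its values on V matter.\<close>
definition rdrd_function :: "'a set \<Rightarrow> ('a \<Rightarrow> 'a \<Rightarrow> bool) \<Rightarrow> ('a \<Rightarrow> nat) \<Rightarrow> bool" where
  "rdrd_function V E f \<longleftrightarrow>
     (\<forall>v\<in>V. f v \<le> 3) \<and>
     (\<forall>v\<in>V. f v = 0 \<longrightarrow>
        ((\<exists>u1\<in>V. \<exists>u2\<in>V. u1 \<noteq> u2 \<and> E v u1 \<and> E v u2 \<and> f u1 = 2 \<and> f u2 = 2)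
         \<or> (\<exists>u\<in>V. E v u \<and> f u = 3))) \<and>
     (\<forall>v\<in>V. f v = 1 \<longrightarrow> (\<exists>u\<in>V. E v u \<and> f u \<ge> 2)) \<and>
     (\<forall>v\<in>V. f v = 0 \<longrightarrow> (\<exists>u\<in>V. E v u \<and> f u = 0))"

definition rdrd_number :: "'a set \<Rightarrow> ('a \<Rightarrow> 'a \<Rightarrow> bool) \<Rightarrow> nat" where
  "rdrd_number V E = (LEAST k. \<exists>f. rdrd_function V E f \<and> sum f V = k)"

end

theory Submission
  imports Defs
begin

text \<open>
  For every RDRD function f, the vertices with f \<ge> 2 dominate and the vertices with
  f \<ge> 1 form a restrained dominating set, and the weight of f is at least the sum of
  the sizes of these two sets; hence gamma + gamma_r \<le> gamma_rdR for every graph.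
  On a star with n vertices the function that is 2 at the centre and 1 elsewhere
  has weight n + 1, while gamma = 1 and gamma_r = n, so equality holds.  If a tree
  is not a star then for every RDRD function f one of the three estimates is
  strict: a value 3 wastes weight; if f has no zeros, the two inner vertices of a
  path a b c d can be removed from V to give a smaller restrained dominating set;
  otherwise a vertex u with f u = 0 has two neighbours a, b of value 2, and either
  one of them can be dropped from {f \<ge> 1}, or both can be replaced by u in
  {f \<ge> 2}, because acyclicity forbids any other vertex to be adjacent to both.
\<close>

lemma Least_value_le: "P x \<Longrightarrow> (LEAST k. \<exists>x. P x \<and> m x = k) \<le> (m x :: nat)"
  by (rule Least_le) blast

lemma LeastI_value:
  assumes "P x"
  shows "\<exists>y. P y \<and> m y = (LEAST k::nat. \<exists>x. P x \<and> m x = k)"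
proof -
  from assms have "\<exists>k x. P x \<and> m x = k" by blast
  then show ?thesis by (rule LeastI_ex)
qed

lemma simple_graph_finite: "simple_graph V E \<Longrightarrow> finite V"
  and simple_graph_sym: "simple_graph V E \<Longrightarrow> E u v \<Longrightarrow> E v u"
  and simple_graph_irrefl: "simple_graph V E \<Longrightarrow> \<not> E v v"
  and simple_graph_edge_in: "simple_graph V E \<Longrightarrow> E u v \<Longrightarrow> u \<in> V \<and> v \<in> V"
  unfolding simple_graph_def by blast+

lemma has_cycle_if_square:
  assumes "E v a" "E a u" "E u b" "E b v" and "distinct [v, a, u, b]"
  shows "has_cycle E"
proof -
  have "is_walk E [v, a, u, b]"
    unfolding is_walk_def
  proof (intro conjI allI impI)
    fix i assume "Suc i < length [v, a, u, b]"
    then have "i = 0 \<or> i = 1 \<or> i = 2" by auto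
    then show "E ([v, a, u, b] ! i) ([v, a, u, b] ! Suc i)" using assms by auto
  qed simp
  moreover have "E (last [v, a, u, b]) (hd [v, a, u, b])" using assms by simp
  ultimately show ?thesis unfolding has_cycle_def
    using assms(5) by (intro exI[where x = "[v, a, u, b]"]) simp
qed

lemma connected_graph_closed_subset:
  assumes conn: "connected_graph V E" and c: "c \<in> C" "c \<in> V"
    and closed: "\<And>x y. x \<in> C \<Longrightarrow> E x y \<Longrightarrow> y \<in> C"
  shows "V \<subseteq> C"
proof
  fix v assume "v \<in> V"
  with conn c obtain p where p: "is_walk E p" "hd p = c" "last p = v"
    unfolding connected_graph_def by blast
  have ne: "p \<noteq> []" using p unfolding is_walk_def by blast
  have "i < length p \<Longrightarrow> p ! i \<in> C" for i
  proof (induction i)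
    case 0
    then show ?case using p ne c by (simp add: hd_conv_nth[symmetric])
  next
    case (Suc i)
    then have "p ! i \<in> C" "E (p ! i) (p ! Suc i)" using p unfolding is_walk_def by auto
    then show ?case using closed by blast
  qed
  then show "v \<in> C" using p ne by (metis last_conv_nth diff_less length_greater_0_conv zero_less_one)
qed

lemma is_star_if_neighbours_pendant:
  assumes sg: "simple_graph V E" and conn: "connected_graph V E" and "b \<in> V"
    and pendant: "\<And>x y. E b x \<Longrightarrow> E x y \<Longrightarrow> y = b"
  shows "is_star V E"
proof -
  have "V \<subseteq> insert b {x. E b x}"
    by (rule connected_graph_closed_subset[OF conn, of b]) (use \<open>b \<in> V\<close> pendant in auto)
  then have centre: "\<forall>v\<in>V. v \<noteq> b \<longrightarrow> E b v" by auto
  have "u = b \<or> v = b" if "E u v" for u v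
    using centre pendant that simple_graph_edge_in[OF sg] by blast
  then show ?thesis unfolding is_star_def using \<open>b \<in> V\<close> centre by blast
qed

lemma nonbacktracking_walk3_if_not_star:
  assumes sg: "simple_graph V E" and conn: "connected_graph V E" and "\<not> is_star V E"
  obtains a b c d where "E a b" "E b c" "E c d" "a \<noteq> c" "b \<noteq> d"
proof -
  have no_centre: "\<exists>x y. E b x \<and> E x y \<and> y \<noteq> b" if "b \<in> V" for b
    using is_star_if_neighbours_pendant[OF sg conn that] \<open>\<not> is_star V E\<close> by blast
  obtain b where "b \<in> V" using conn unfolding connected_graph_def by blast
  then obtain x y where bxy: "E b x" "E x y" "y \<noteq> b" using no_centre by blast
  show ?thesis
  proof (cases "\<exists>z. E b z \<and> z \<noteq> x")
    case True
    then obtain z where "E b z" "z \<noteq> x" by blast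
    then show ?thesis using that[of y x b z] bxy simple_graph_sym[OF sg] by blast
  next
    case False
    obtain x' y' where "E x x'" "E x' y'" "y' \<noteq> x"
      using no_centre simple_graph_edge_in[OF sg bxy(1)] by blast
    moreover have "x' \<noteq> b" using False calculation by blast
    ultimately show ?thesis using that[of b x x' y'] bxy by blast
  qed
qed

lemma domination_number_le: "dominating_set V E S \<Longrightarrow> domination_number V E \<le> card S"
  unfolding domination_number_def by (rule Least_value_le)

lemma restrained_domination_number_le:
  "restrained_dominating_set V E S \<Longrightarrow> restrained_domination_number V E \<le> card S"
  unfolding restrained_domination_number_def by (rule Least_value_le)

lemma rdrd_number_le: "rdrd_function V E f \<Longrightarrow> rdrd_number V E \<le> sum f V"
  unfolding rdrd_number_def by (rule Least_value_le)

lemma domination_number_attained: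
  obtains D where "dominating_set V E D" "card D = domination_number V E"
proof -
  have "dominating_set V E V" unfolding dominating_set_def by simp
  then show ?thesis
    using that LeastI_value[of "dominating_set V E" V card] unfolding domination_number_def by blast
qed

lemma restrained_domination_number_attained:
  obtains R where "restrained_dominating_set V E R" "card R = restrained_domination_number V E"
proof -
  have "restrained_dominating_set V E V" unfolding restrained_dominating_set_def by simp
  then show ?thesis
    using that LeastI_value[of "restrained_dominating_set V E" V card]
    unfolding restrained_domination_number_def by blast
qed

lemma rdrd_number_attained:
  obtains f where "rdrd_function V E f" "sum f V = rdrd_number V E"
proof -
  have "rdrd_function V E (\<lambda>_. 2)" unfolding rdrd_function_def by simp
  then show ?thesis
    using that LeastI_value[of "rdrd_function V E" _ "\<lambda>f. sum f V"] unfolding rdrd_number_def by blast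
qed

lemma domination_number_pos:
  assumes "finite V" "V \<noteq> {}"
  shows "0 < domination_number V E"
proof -
  obtain D where D: "dominating_set V E D" "card D = domination_number V E"
    by (rule domination_number_attained)
  then have "D \<subseteq> V" "D \<noteq> {}" using assms unfolding dominating_set_def by auto
  then show ?thesis using D(2) assms(1) by (metis card_gt_0_iff finite_subset)
qed

subsection \<open>RDRD functions\<close>

lemma rdrd_small_neighbour_ge2:
  assumes "rdrd_function V E f" "v \<in> V" "f v < 2"
  shows "\<exists>w\<in>V. E v w \<and> 2 \<le> f w"
proof (cases "f v = 0")
  case True
  then show ?thesis using assms unfolding rdrd_function_def by fastforce
next
  case False
  then show ?thesis using assms unfolding rdrd_function_def by auto
qed

lemma rdrd_zero_neighbour_zero:
  "rdrd_function V E f \<Longrightarrow> v \<in> V \<Longrightarrow> f v = 0 \<Longrightarrow> \<exists>w\<in>V. E v w \<and> f w = 0"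
  unfolding rdrd_function_def by blast

lemma rdrd_zero_neighbour_outside:
  assumes "rdrd_function V E f" "v \<in> V" "f v = 0"
    and no3: "\<And>a. a \<in> A \<Longrightarrow> f a \<noteq> 3"
    and at_most_one: "\<And>a b. a \<in> A \<Longrightarrow> b \<in> A \<Longrightarrow> E v a \<Longrightarrow> E v b \<Longrightarrow> a = b"
  shows "\<exists>w\<in>V - A. E v w \<and> 2 \<le> f w"
proof -
  have "(\<exists>u1\<in>V. \<exists>u2\<in>V. u1 \<noteq> u2 \<and> E v u1 \<and> E v u2 \<and> f u1 = 2 \<and> f u2 = 2)
        \<or> (\<exists>u\<in>V. E v u \<and> f u = 3)"
    using assms(1-3) unfolding rdrd_function_def by blast
  then show ?thesis
  proof (elim disjE bexE conjE)
    fix u1 u2 assume "u1 \<in> V" "u2 \<in> V" "u1 \<noteq> u2" "E v u1" "E v u2" "f u1 = 2" "f u2 = 2"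
    then show ?thesis using at_most_one by (cases "u1 \<in> A") auto
  next
    fix u assume "u \<in> V" "E v u" "f u = 3"
    then show ?thesis using no3 by force
  qed
qed

lemma rdrd_dominating_set:
  assumes "rdrd_function V E f"
  shows "dominating_set V E {v\<in>V. 2 \<le> f v}"
  unfolding dominating_set_def
proof (intro conjI ballI)
  fix v assume "v \<in> V - {v\<in>V. 2 \<le> f v}"
  then show "\<exists>u\<in>{v\<in>V. 2 \<le> f v}. E v u"
    using rdrd_small_neighbour_ge2[OF assms, of v] by auto
qed auto

lemma rdrd_restrained_dominating_set:
  assumes "rdrd_function V E f"
  shows "restrained_dominating_set V E {v\<in>V. 1 \<le> f v}"
  unfolding restrained_dominating_set_def
  using rdrd_small_neighbour_ge2[OF assms] rdrd_zero_neighbour_zero[OF assms] by fastforce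

lemma card_thresholds_le_sum:
  fixes f :: "'a \<Rightarrow> nat"
  assumes "finite V"
  shows "card {v\<in>V. 1 \<le> f v} + card {v\<in>V. 2 \<le> f v} + card {v\<in>V. 3 \<le> f v} \<le> sum f V"
proof -
  have card_as_sum: "card {v\<in>V. P v} = (\<Sum>v\<in>V. if P v then 1 else 0)" for P
    using assms by (simp add: sum.If_cases Int_def)
  show ?thesis
    unfolding card_as_sum sum.distrib[symmetric] by (rule sum_mono) auto
qed

lemma domination_plus_restrained_le_rdrd_weight:
  assumes "finite V" "rdrd_function V E f"
  shows "domination_number V E + restrained_domination_number V E \<le> sum f V"
  using domination_number_le[OF rdrd_dominating_set[OF assms(2)]]
    restrained_domination_number_le[OF rdrd_restrained_dominating_set[OF assms(2)]]
    card_thresholds_le_sum[OF assms(1), of f]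
  by linarith

subsection \<open>Stars\<close>

lemma star_restrained_dominating_set_eq:
  assumes sg: "simple_graph V E" and "is_star V E" and R: "restrained_dominating_set V E R"
  shows "R = V"
proof (rule ccontr)
  obtain c where c: "c \<in> V" "\<And>u v. E u v \<Longrightarrow> u = c \<or> v = c"
    using \<open>is_star V E\<close> unfolding is_star_def by blast
  have nbrs: "\<exists>x\<in>R. E w x" "\<exists>y\<in>V - R. E w y" if "w \<in> V - R" for w
    using R that unfolding restrained_dominating_set_def by blast+
  assume "R \<noteq> V"
  then obtain v where v: "v \<in> V - R" using R unfolding restrained_dominating_set_def by blast
  then obtain x y where xy: "x \<in> R" "E v x" "y \<in> V - R" "E v y" using nbrs by blast
  show False
  proof (cases "v = c")
    case True
    have "y \<noteq> c" using xy True simple_graph_irrefl[OF sg] by blast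
    moreover obtain z where "z \<in> R" "E y z" using nbrs[OF xy(3)] by blast
    ultimately show False using c(2) True v by blast
  next
    case False
    then show False using c(2) xy by blast
  qed
qed

lemma star_rdrd_number_eq:
  assumes sg: "simple_graph V E" and star: "is_star V E"
  shows "rdrd_number V E = domination_number V E + restrained_domination_number V E"
proof -
  obtain c where c: "c \<in> V" "\<forall>v\<in>V. v \<noteq> c \<longrightarrow> E c v" "\<forall>u v. E u v \<longrightarrow> u = c \<or> v = c"
    using star unfolding is_star_def by blast
  have fin: "finite V" using simple_graph_finite[OF sg] .
  define g where "g v = (if v = c then 2 else 1 :: nat)" for v
  have "rdrd_function V E g"
    unfolding rdrd_function_def g_def using c by (auto intro: simple_graph_sym[OF sg])
  then have "rdrd_number V E \<le> sum g V" by (rule rdrd_number_le)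
  also have "sum g V = g c + sum g (V - {c})" using fin c(1) by (rule sum.remove)
  also have "sum g (V - {c}) = (\<Sum>v\<in>V - {c}. 1)" by (rule sum.cong) (auto simp: g_def)
  also have "g c + (\<Sum>v\<in>V - {c}. 1) = card V + 1"
    using fin c(1) card_gt_0_iff[of V] by (auto simp: g_def)
  finally have upper: "rdrd_number V E \<le> card V + 1" .
  obtain R where R: "restrained_dominating_set V E R" "card R = restrained_domination_number V E"
    by (rule restrained_domination_number_attained)
  have "R = V" using star_restrained_dominating_set_eq[OF sg star R(1)] .
  then have "restrained_domination_number V E = card V" using R(2) by simp
  moreover have "0 < domination_number V E" using domination_number_pos fin c(1) by blast
  moreover obtain f where "rdrd_function V E f" "sum f V = rdrd_number V E"
    by (rule rdrd_number_attained)
  ultimately show ?thesis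
    using upper domination_plus_restrained_le_rdrd_weight[OF fin] by fastforce
qed

subsection \<open>Trees that are not stars\<close>

lemma restrained_domination_number_lt_card_if_walk3:
  assumes sg: "simple_graph V E" and walk: "E a b" "E b c" "E c d" and "a \<noteq> c" "b \<noteq> d"
  shows "restrained_domination_number V E < card V"
proof -
  have in_V: "b \<in> V" "c \<in> V" using walk simple_graph_edge_in[OF sg] by auto
  have "a \<in> V - {b, c}" "d \<in> V - {b, c}"
    using assms simple_graph_edge_in[OF sg] simple_graph_irrefl[OF sg] by auto
  moreover have "E b a" "E c b" using walk(1,2) by (auto intro: simple_graph_sym[OF sg])
  ultimately have "restrained_dominating_set V E (V - {b, c})"
    unfolding restrained_dominating_set_def using walk in_V by blast
  then have "restrained_domination_number V E \<le> card (V - {b, c})"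
    by (rule restrained_domination_number_le)
  also have "\<dots> < card V"
    using in_V simple_graph_finite[OF sg] by (intro psubset_card_mono) auto
  finally show ?thesis .
qed

lemma restrained_domination_number_lt_card_positive:
  assumes sg: "simple_graph V E" and f: "rdrd_function V E f"
    and u: "u \<in> V" "f u = 0" "E u a" and "f a = 2" and w: "E a w" "1 \<le> f w"
  shows "restrained_domination_number V E < card {v\<in>V. 1 \<le> f v}"
proof -
  let ?P = "{v\<in>V. 1 \<le> f v}"
  have "a \<in> V" "w \<in> V" "w \<noteq> a"
    using u(3) w simple_graph_edge_in[OF sg] simple_graph_irrefl[OF sg] by auto
  have "(\<exists>x\<in>?P - {a}. E v x) \<and> (\<exists>x\<in>V - (?P - {a}). E v x)"
    if v: "v \<in> V - (?P - {a})" for v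
  proof (cases "v = a")
    case True
    have "w \<in> ?P - {a}" "u \<in> V - (?P - {a})" using \<open>w \<in> V\<close> \<open>w \<noteq> a\<close> w u by auto
    moreover have "E a u" using u(3) by (rule simple_graph_sym[OF sg])
    ultimately show ?thesis using True w(1) by blast
  next
    case False
    with v have "v \<in> V" "f v = 0" by auto
    then show ?thesis
      using rdrd_zero_neighbour_outside[OF f, of v "{a}"] rdrd_zero_neighbour_zero[OF f]
        \<open>f a = 2\<close> by fastforce
  qed
  then have "restrained_dominating_set V E (?P - {a})"
    unfolding restrained_dominating_set_def by blast
  then have "restrained_domination_number V E \<le> card (?P - {a})"
    by (rule restrained_domination_number_le)
  also have "\<dots> < card ?P"
    using \<open>a \<in> V\<close> \<open>f a = 2\<close> simple_graph_finite[OF sg] by (intro card_Diff1_less) auto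
  finally show ?thesis .
qed

lemma domination_number_lt_card_ge2:
  assumes sg: "simple_graph V E" and acyclic: "\<not> has_cycle E" and f: "rdrd_function V E f"
    and u: "u \<in> V" "f u = 0" "E u a" "E u b" and "a \<noteq> b" "f a = 2" "f b = 2"
    and pendant: "\<And>w. E a w \<or> E b w \<Longrightarrow> f w = 0"
  shows "domination_number V E < card {v\<in>V. 2 \<le> f v}"
proof -
  let ?D = "{v\<in>V. 2 \<le> f v}"
  have finD: "finite ?D" using simple_graph_finite[OF sg] by simp
  have ab: "a \<in> ?D" "b \<in> ?D" "a \<noteq> u" "b \<noteq> u"
    using u \<open>f a = 2\<close> \<open>f b = 2\<close> simple_graph_edge_in[OF sg] simple_graph_irrefl[OF sg]
    by auto
  have "E a u" "E b u" using u(3,4) by (auto intro: simple_graph_sym[OF sg])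
  have strong_outside: "\<exists>w\<in>V - {a, b}. E v w \<and> 2 \<le> f w"
    if v: "v \<in> V" "v \<notin> {a, b}" "v \<noteq> u" "f v < 2" for v
  proof (cases "f v = 0")
    case True
    have at_most_one: "x = y" if "x \<in> {a, b}" "y \<in> {a, b}" "E v x" "E v y" for x y
    proof (rule ccontr)
      assume "x \<noteq> y"
      with that have "E v a" "E v b" by auto
      moreover from this(2) have "E b v" by (rule simple_graph_sym[OF sg])
      moreover have "distinct [v, a, u, b]" using v ab \<open>a \<noteq> b\<close> by auto
      ultimately have "has_cycle E" using has_cycle_if_square[of E v a u b] \<open>E a u\<close> u(4) by simp
      with acyclic show False ..
    qed
    show ?thesis
      by (rule rdrd_zero_neighbour_outside[OF f v(1) True _ at_most_one])
        (use \<open>f a = 2\<close> \<open>f b = 2\<close> in auto)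
  next
    case False
    obtain w where w: "w \<in> V" "E v w" "2 \<le> f w"
      using rdrd_small_neighbour_ge2[OF f v(1,4)] by blast
    have "w \<notin> {a, b}"
    proof
      assume "w \<in> {a, b}"
      moreover have "E w v" using w(2) by (rule simple_graph_sym[OF sg])
      ultimately have "f v = 0" using pendant by blast
      with False show False ..
    qed
    with w show ?thesis by blast
  qed
  have "dominating_set V E (insert u (?D - {a, b}))"
    unfolding dominating_set_def
  proof (intro conjI ballI)
    fix v assume v: "v \<in> V - insert u (?D - {a, b})"
    show "\<exists>x\<in>insert u (?D - {a, b}). E v x"
    proof (cases "v \<in> {a, b}")
      case True
      then show ?thesis using \<open>E a u\<close> \<open>E b u\<close> by blast
    next
      case False
      with v have "v \<in> V" "v \<notin> {a, b}" "v \<noteq> u" "f v < 2" by auto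
      then obtain w where "w \<in> V - {a, b}" "E v w" "2 \<le> f w" using strong_outside by blast
      then show ?thesis by blast
    qed
  qed (use u in auto)
  then have "domination_number V E \<le> card (insert u (?D - {a, b}))"
    by (rule domination_number_le)
  also have "\<dots> \<le> Suc (card (?D - {a, b}))"
    using finD by (simp add: card_insert_if)
  also have "card (?D - {a, b}) = card ?D - 2"
    using ab \<open>a \<noteq> b\<close> finD by (subst card_Diff_subset) auto
  also have "Suc (card ?D - 2) < card ?D"
  proof -
    have "card {a, b} \<le> card ?D" using ab finD by (intro card_mono) auto
    then show ?thesis using \<open>a \<noteq> b\<close> by simp
  qed
  finally show ?thesis .
qed

lemma domination_or_restrained_lt_if_zero:
  assumes sg: "simple_graph V E" and acyclic: "\<not> has_cycle E" and f: "rdrd_function V E f"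
    and no3: "\<forall>v\<in>V. f v \<noteq> 3" and u: "u \<in> V" "f u = 0"
  shows "domination_number V E < card {v\<in>V. 2 \<le> f v}
         \<or> restrained_domination_number V E < card {v\<in>V. 1 \<le> f v}"
proof -
  obtain a b where ab: "E u a" "E u b" "a \<noteq> b" "f a = 2" "f b = 2"
    using f no3 u unfolding rdrd_function_def by blast
  show ?thesis
  proof (cases "\<exists>x w. x \<in> {a, b} \<and> E x w \<and> 1 \<le> f w")
    case True
    then obtain x w where "x \<in> {a, b}" "E x w" "1 \<le> f w" by blast
    moreover from this have "E u x" "f x = 2" using ab by auto
    ultimately show ?thesis
      using restrained_domination_number_lt_card_positive[OF sg f u] by blast
  next
    case False
    then have "\<And>w. E a w \<or> E b w \<Longrightarrow> f w = 0" by (auto simp: Suc_le_eq)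
    then show ?thesis
      using domination_number_lt_card_ge2[OF sg acyclic f u ab] by blast
  qed
qed

lemma domination_plus_restrained_lt_rdrd_weight:
  assumes tree: "is_tree V E" and "\<not> is_star V E" and f: "rdrd_function V E f"
  shows "domination_number V E + restrained_domination_number V E < sum f V"
proof -
  have sg: "simple_graph V E" and conn: "connected_graph V E" and acyclic: "\<not> has_cycle E"
    using tree unfolding is_tree_def by auto
  let ?P = "{v\<in>V. 1 \<le> f v}" and ?D = "{v\<in>V. 2 \<le> f v}" and ?T = "{v\<in>V. 3 \<le> f v}"
  have "domination_number V E < card ?D \<or> restrained_domination_number V E < card ?P
        \<or> 0 < card ?T"
  proof (cases "\<exists>v\<in>V. f v = 3")
    case True
    then show ?thesis using simple_graph_finite[OF sg] by (auto simp: card_gt_0_iff)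
  next
    case no3: False
    show ?thesis
    proof (cases "\<exists>u\<in>V. f u = 0")
      case False
      then have "?P = V" by auto
      moreover obtain a b c d where "E a b" "E b c" "E c d" "a \<noteq> c" "b \<noteq> d"
        using nonbacktracking_walk3_if_not_star[OF sg conn \<open>\<not> is_star V E\<close>] .
      ultimately show ?thesis using restrained_domination_number_lt_card_if_walk3[OF sg] by auto
    next
      case True
      then show ?thesis using domination_or_restrained_lt_if_zero[OF sg acyclic f] no3 by blast
    qed
  qed
  then show ?thesis
    using domination_number_le[OF rdrd_dominating_set[OF f]]
      restrained_domination_number_le[OF rdrd_restrained_dominating_set[OF f]]
      card_thresholds_le_sum[OF simple_graph_finite[OF sg], of f]
    by linarith
qed

theorem proposition2p10:
  fixes V :: "'a set" and E :: "'a \<Rightarrow> 'a \<Rightarrow> bool"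
  assumes "is_tree V E"
  shows "rdrd_number V E = domination_number V E + restrained_domination_number V E
         \<longleftrightarrow> is_star V E"
proof
  assume eq: "rdrd_number V E = domination_number V E + restrained_domination_number V E"
  obtain f where f: "rdrd_function V E f" "sum f V = rdrd_number V E"
    by (rule rdrd_number_attained)
  show "is_star V E"
  proof (rule ccontr)
    assume "\<not> is_star V E"
    from domination_plus_restrained_lt_rdrd_weight[OF assms this f(1)] eq f(2)
    show False by linarith
  qed
next
  assume "is_star V E"
  moreover have "simple_graph V E" using assms unfolding is_tree_def by blast
  ultimately show "rdrd_number V E = domination_number V E + restrained_domination_number V E"
    using star_rdrd_number_eq by blast
qed

end
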